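(* Let $n\ge 2$ and $m_1,\dots,m_n\ge1$, $m=m_1+\dots+m_n$. Assume: (a) each $h_i:Q_q^{m_i}\to Q_q$ ($i=1,\dots,n$) is an $m_i$-ary iterated group (for a group on $Q_q$ with identity $0$); (b) $f:Q_q^n\to Q_q$ is an isotopically transitive $n$-ary quasigroup, with $G_f$ the autotopy group of its graph $\{(x_0,x_1,\dots,x_n): x_0=f(x_1,\dots,x_n)\}$, whose elements are written $\overline\sigma=(\sigma_0,\sigma_1,\dots,\sigma_n)$; (c) for every $i\in\{1,\dots,n\}$ and every $\overline\sigma\in G_f$ there exists an isotopism $\overline\tau_i$ of $Q_q^{m_i}$ with $h_i(\overline\tau_i\overline z_i)=\sigma_i h_i(\overline z_i)$ for all $\overline z_i\in Q_q^{m_i}$. Then the $m$-ary quasigroup $g(\overline z_1,\dots,\overline z_n)=f(h_1(\overline z_1),\dots,h_n(\overline z_n))$ is isotopically transitive.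
   Context: An $n$-ary quasigroup of order $q$ is a function $f:Q_q^n\to Q_q$ such that $f(\overline x)\ne f(\overline y)$ whenever $\overline x,\overline y$ differ in exactly one coordinate; it is called isotopically transitive if its graph $\{(x_0,\overline x): x_0=f(\overline x)\}\subseteq Q_q^{n+1}$ is isotopically transitive. An $m$-ary iterated group is a function $(z_1,\dots,z_m)\mapsto z_1\circ\cdots\circ z_m$ for a group operation $\circ$ on $Q_q$. An isotopism of $Q_q^N$ is a map $\overline{x}\mapsto(\tau_1x_1,\dots,\tau_Nx_N)$ with $\tau_i$ permutations of $Q_q$; the autotopy group of $A\subseteq Q_q^N$ is the group of isotopisms mapping $A$ onto $A$, and $A$ is isotopically transitive if this group acts transitively on $A$. *)

theory Defs
  imports "HOL-Algebra.Group"
begin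

text \<open>Q_q = {0,...,q-1}; Q_q^N is represented by lists of length N over Q_q,
  coordinates indexed 0..N-1.\<close>

definition Qn :: "nat \<Rightarrow> nat \<Rightarrow> nat list set" where
  "Qn q N = {xs. length xs = N \<and> set xs \<subseteq> {..<q}}"

definition is_quasigroup :: "nat \<Rightarrow> nat \<Rightarrow> (nat list \<Rightarrow> nat) \<Rightarrow> bool" where
  "is_quasigroup q n f \<longleftrightarrow>
     (\<forall>x\<in>Qn q n. f x \<in> {..<q}) \<and>
     (\<forall>x\<in>Qn q n. \<forall>y\<in>Qn q n. card {i. i < n \<and> x ! i \<noteq> y ! i} = 1 \<longrightarrow> f x \<noteq> f y)"

definition isotopism :: "nat \<Rightarrow> nat \<Rightarrow> (nat \<Rightarrow> nat \<Rightarrow> nat) \<Rightarrow> bool" where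
  "isotopism q N \<tau> \<longleftrightarrow> (\<forall>i<N. bij_betw (\<tau> i) {..<q} {..<q})"

definition iso_apply :: "(nat \<Rightarrow> nat \<Rightarrow> nat) \<Rightarrow> nat list \<Rightarrow> nat list" where
  "iso_apply \<tau> xs = map (\<lambda>i. \<tau> i (xs ! i)) [0..<length xs]"

definition autotopy_group :: "nat \<Rightarrow> nat \<Rightarrow> nat list set \<Rightarrow> (nat \<Rightarrow> nat \<Rightarrow> nat) set" where
  "autotopy_group q N A = {\<tau>. isotopism q N \<tau> \<and> iso_apply \<tau> ` A = A}"

definition isotopically_transitive :: "nat \<Rightarrow> nat \<Rightarrow> nat list set \<Rightarrow> bool" where
  "isotopically_transitive q N A \<longleftrightarrow>
     (\<forall>x\<in>A. \<forall>y\<in>A. \<exists>\<tau>\<in>autotopy_group q N A. iso_apply \<tau> x = y)"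

definition qgraph :: "nat \<Rightarrow> nat \<Rightarrow> (nat list \<Rightarrow> nat) \<Rightarrow> nat list set" where
  "qgraph q n f = {f xs # xs | xs. xs \<in> Qn q n}"

definition iso_transitive_quasigroup :: "nat \<Rightarrow> nat \<Rightarrow> (nat list \<Rightarrow> nat) \<Rightarrow> bool" where
  "iso_transitive_quasigroup q n f \<longleftrightarrow>
     is_quasigroup q n f \<and> isotopically_transitive q (n + 1) (qgraph q n f)"

definition iterated_group :: "nat \<Rightarrow> nat \<Rightarrow> (nat list \<Rightarrow> nat) \<Rightarrow> bool" where
  "iterated_group q m h \<longleftrightarrow>
     (\<exists>op. group \<lparr>carrier = {..<q}, mult = op, one = 0\<rparr> \<and>
           (\<forall>zs\<in>Qn q m. h zs = foldr op zs 0))"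

definition compose_qg :: "nat \<Rightarrow> (nat list \<Rightarrow> nat) \<Rightarrow> (nat \<Rightarrow> nat list \<Rightarrow> nat) \<Rightarrow> (nat \<Rightarrow> nat)
    \<Rightarrow> nat list \<Rightarrow> nat" where
  "compose_qg n f h m zs =
     f (map (\<lambda>i. h i (take (m i) (drop (\<Sum>j\<in>{1..<i}. m j) zs))) [1..<n+1])"

end

theory Submission
  imports Defs
begin

text \<open>Changing one coordinate of the input changes one block, hence exactly one argument of \<open>f\<close>,
  since iterated groups are quasigroups; so \<open>g\<close> is a quasigroup.
  For transitivity take two points of the graph of \<open>g\<close> and an autotopy \<open>\<sigma>\<close> of the graph of \<open>f\<close>
  mapping the corresponding points of that graph onto each other. By hypothesis each \<open>\<sigma>\<^sub>i\<close> is
  realised on the \<open>i\<close>-th block by an isotopism \<open>\<tau>\<^sub>i\<close> with \<open>h\<^sub>i \<circ> \<tau>\<^sub>i = \<sigma>\<^sub>i \<circ> h\<^sub>i\<close>. It need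
  not send the \<open>i\<close>-th block of the first point to that of the second, only into the same fibre
  of \<open>h\<^sub>i\<close>; but the value-preserving autotopies of an iterated group act transitively on each
  fibre. Correcting \<open>\<tau>\<^sub>i\<close> accordingly and putting the
  blocks side by side behind \<open>\<sigma>\<^sub>0\<close> gives the required autotopy of the graph of \<open>g\<close>.\<close>

section \<open>Isotopisms of \<open>Q\<^sub>q\<^sup>N\<close>\<close>

lemma Qn_nth: "x \<in> Qn q N \<Longrightarrow> i < N \<Longrightarrow> x ! i < q"
  unfolding Qn_def by (auto dest!: nth_mem)

lemma finite_Qn: "finite (Qn q N)"
  using finite_lists_length_eq[of "{..<q}" N] by (simp add: Qn_def conj_commute)

lemma card_differ_eq_1_iff:
  "card {i. i < N \<and> x ! i \<noteq> y ! i} = 1 \<longleftrightarrow>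
     (\<exists>p<N. x ! p \<noteq> y ! p \<and> (\<forall>j<N. j \<noteq> p \<longrightarrow> x ! j = y ! j))"
  by (auto simp: card_1_singleton_iff)

lemma length_iso_apply [simp]: "length (iso_apply T xs) = length xs"
  by (simp add: iso_apply_def)

lemma nth_iso_apply [simp]: "j < length xs \<Longrightarrow> iso_apply T xs ! j = T j (xs ! j)"
  by (simp add: iso_apply_def)

lemma iso_apply_cong:
  "(\<And>j. j < length xs \<Longrightarrow> T j (xs ! j) = T' j (xs ! j)) \<Longrightarrow> iso_apply T xs = iso_apply T' xs"
  by (simp add: iso_apply_def)

lemma iso_apply_Nil [simp]: "iso_apply T [] = []"
  by (simp add: iso_apply_def)

lemma iso_apply_Cons: "iso_apply T (x # xs) = T 0 x # iso_apply (\<lambda>k. T (Suc k)) xs"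
  by (rule nth_equalityI) (auto simp: nth_Cons split: nat.splits)

lemma iso_apply_comp: "iso_apply (\<lambda>j. A j \<circ> B j) xs = iso_apply A (iso_apply B xs)"
  by (rule nth_equalityI) auto

lemma isotopism_comp:
  "isotopism q N A \<Longrightarrow> isotopism q N B \<Longrightarrow> isotopism q N (\<lambda>j. A j \<circ> B j)"
  unfolding isotopism_def using bij_betw_trans by blast

lemma isotopism_case_nat:
  "bij_betw s {..<q} {..<q} \<Longrightarrow> isotopism q N T \<Longrightarrow> isotopism q (Suc N) (case_nat s T)"
  by (auto simp: isotopism_def less_Suc_eq_0_disj)

lemma iso_apply_in_Qn:
  assumes "isotopism q N T" "x \<in> Qn q N"
  shows "iso_apply T x \<in> Qn q N"
proof -
  have "T k (x ! k) < q" if "k < N" for k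
    using assms Qn_nth[OF assms(2) that] that by (auto simp: isotopism_def dest: bij_betwE)
  then show ?thesis using assms(2) by (auto simp: Qn_def in_set_conv_nth)
qed

lemma inj_on_iso_apply:
  assumes "isotopism q N T"
  shows "inj_on (iso_apply T) (Qn q N)"
proof
  fix x y assume x: "x \<in> Qn q N" and y: "y \<in> Qn q N" and eq: "iso_apply T x = iso_apply T y"
  show "x = y"
  proof (rule nth_equalityI)
    show "length x = length y" using x y by (simp add: Qn_def)
    fix k assume "k < length x"
    then have k: "k < N" using x by (simp add: Qn_def)
    have "T k (x ! k) = T k (y ! k)"
      using arg_cong[OF eq, of "\<lambda>l. l ! k"] k x y by (simp add: Qn_def)
    moreover have "inj_on (T k) {..<q}" using assms k by (simp add: isotopism_def bij_betw_def)
    ultimately show "x ! k = y ! k" using Qn_nth[OF x k] Qn_nth[OF y k] by (simp add: inj_on_def)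
  qed
qed

section \<open>Iterated groups\<close>

context group
begin

lemma foldr_closed:
  "set xs \<subseteq> carrier G \<Longrightarrow> c \<in> carrier G \<Longrightarrow> foldr (\<otimes>) xs c \<in> carrier G"
  by (induction xs) auto

lemma foldr_mult_shift:
  "set xs \<subseteq> carrier G \<Longrightarrow> c \<in> carrier G \<Longrightarrow> foldr (\<otimes>) xs c = foldr (\<otimes>) xs \<one> \<otimes> c"
  by (induction xs) (auto simp: m_assoc foldr_closed)

lemma foldr_snoc:
  "set xs \<subseteq> carrier G \<Longrightarrow> x \<in> carrier G \<Longrightarrow> foldr (\<otimes>) (xs @ [x]) \<one> = foldr (\<otimes>) xs \<one> \<otimes> x"
  by (simp add: foldr_mult_shift[of xs x])

lemma foldr_take_Suc:
  assumes "set xs \<subseteq> carrier G" "j < length xs"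
  shows "foldr (\<otimes>) (take (Suc j) xs) \<one> = foldr (\<otimes>) (take j xs) \<one> \<otimes> xs ! j"
proof -
  have "set (take j xs) \<subseteq> carrier G" "xs ! j \<in> carrier G"
    using assms by (auto dest: in_set_takeD)
  then show ?thesis
    using assms(2) by (simp add: take_Suc_conv_app_nth foldr_snoc del: foldr_append)
qed

lemma inv_mult_cancel_left [simp]: "x \<in> carrier G \<Longrightarrow> y \<in> carrier G \<Longrightarrow> inv x \<otimes> (x \<otimes> y) = y"
  by (simp add: m_assoc [symmetric])

lemma mult_inv_cancel_left [simp]: "x \<in> carrier G \<Longrightarrow> y \<in> carrier G \<Longrightarrow> x \<otimes> (inv x \<otimes> y) = y"
  by (simp add: m_assoc [symmetric])

lemma foldr_eq_iff_middle_eq: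
  assumes "set xs \<subseteq> carrier G" "set ys \<subseteq> carrier G" "x \<in> carrier G" "y \<in> carrier G"
  shows "foldr (\<otimes>) (xs @ x # ys) \<one> = foldr (\<otimes>) (xs @ y # ys) \<one> \<longleftrightarrow> x = y"
  using assms foldr_mult_shift[of xs "x \<otimes> foldr (\<otimes>) ys \<one>"] foldr_mult_shift[of xs "y \<otimes> foldr (\<otimes>) ys \<one>"]
  by (simp add: foldr_closed)

lemma bij_betw_translations:
  "a \<in> carrier G \<Longrightarrow> b \<in> carrier G \<Longrightarrow> bij_betw (\<lambda>v. a \<otimes> v \<otimes> b) (carrier G) (carrier G)"
  by (rule bij_betw_byWitness[where f'="\<lambda>v. inv a \<otimes> v \<otimes> inv b"]) (auto simp: m_assoc)

end

lemma foldr_iso_apply_telescope: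
  fixes G :: "(nat, 'b) monoid_scheme" (structure)
  assumes "group G" "set z \<subseteq> carrier G" "\<And>j. a j \<in> carrier G"
  shows "foldr (\<otimes>) (iso_apply (\<lambda>j v. inv (a j) \<otimes> v \<otimes> a (Suc j)) z) \<one>
           = inv (a 0) \<otimes> foldr (\<otimes>) z \<one> \<otimes> a (length z)"
proof -
  interpret group G by (rule assms(1))
  show ?thesis
    using assms(2,3)
  proof (induction z arbitrary: a)
    case (Cons x z)
    have "foldr (\<otimes>) (iso_apply (\<lambda>j v. inv (a (Suc j)) \<otimes> v \<otimes> a (Suc (Suc j))) z) \<one>
          = inv (a 1) \<otimes> foldr (\<otimes>) z \<one> \<otimes> a (Suc (length z))"
      using Cons.IH[of "\<lambda>j. a (Suc j)"] Cons.prems by simp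
    then show ?case
      using Cons.prems by (simp add: iso_apply_Cons m_assoc foldr_closed)
  qed simp
qed

lemma iterated_groupE:
  assumes "iterated_group q k h"
  obtains G :: "nat monoid"
  where "group G" "carrier G = {..<q}" "\<And>z. z \<in> Qn q k \<Longrightarrow> h z = foldr (\<otimes>\<^bsub>G\<^esub>) z \<one>\<^bsub>G\<^esub>"
proof -
  obtain op where "group \<lparr>carrier = {..<q}, mult = op, one = 0\<rparr>"
    and "\<forall>z\<in>Qn q k. h z = foldr op z 0"
    using assms unfolding iterated_group_def by blast
  then show thesis by (intro that[of "\<lparr>carrier = {..<q}, mult = op, one = 0\<rparr>"]) auto
qed

lemma iterated_group_is_quasigroup:
  assumes "iterated_group q k h"
  shows "is_quasigroup q k h"
proof -
  obtain G :: "nat monoid" where "group G" and carrier: "carrier G = {..<q}"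
    and h: "\<And>z. z \<in> Qn q k \<Longrightarrow> h z = foldr (\<otimes>\<^bsub>G\<^esub>) z \<one>\<^bsub>G\<^esub>"
    using iterated_groupE[OF assms] by blast
  interpret group G by fact
  have in_carrier: "set z \<subseteq> carrier G" if "z \<in> Qn q k" for z
    using that carrier by (auto simp: Qn_def)
  have "h u \<noteq> h v"
    if u: "u \<in> Qn q k" and v: "v \<in> Qn q k" and p: "p < k" "u ! p \<noteq> v ! p"
      and same: "\<forall>j<k. j \<noteq> p \<longrightarrow> u ! j = v ! j" for u v p
  proof -
    have len: "length u = k" "length v = k" using u v by (auto simp: Qn_def)
    have "take p v = take p u" "drop (Suc p) v = drop (Suc p) u"
      using len p same by (auto intro: nth_equalityI)
    then have split: "u = take p u @ u ! p # drop (Suc p) u" "v = take p u @ v ! p # drop (Suc p) u"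
      using id_take_nth_drop len p by metis+
    have "set (take p u) \<subseteq> carrier G" "set (drop (Suc p) u) \<subseteq> carrier G"
      using in_carrier[OF u] by (auto dest: in_set_takeD in_set_dropD)
    moreover have "u ! p \<in> carrier G" "v ! p \<in> carrier G"
      using in_carrier u v len p by (auto simp: subset_iff)
    ultimately show ?thesis
      using p h[OF u] h[OF v] foldr_eq_iff_middle_eq split by metis
  qed
  moreover have "h z \<in> {..<q}" if "z \<in> Qn q k" for z
    using foldr_closed[OF in_carrier[OF that] one_closed] h[OF that] carrier by simp
  ultimately show ?thesis
    unfolding is_quasigroup_def card_differ_eq_1_iff by blast
qed

definition fibre_transitive :: "nat \<Rightarrow> nat \<Rightarrow> (nat list \<Rightarrow> nat) \<Rightarrow> bool" where
  "fibre_transitive q k h \<longleftrightarrow>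
     (\<forall>u\<in>Qn q k. \<forall>w\<in>Qn q k. h u = h w \<longrightarrow>
        (\<exists>\<rho>. isotopism q k \<rho> \<and> (\<forall>z\<in>Qn q k. h (iso_apply \<rho> z) = h z) \<and> iso_apply \<rho> u = w))"

text \<open>If \<open>u\<close> and \<open>w\<close> have the same product, let \<open>a\<^sub>j = P\<^sub>u(j)\<inverse> P\<^sub>w(j)\<close> with \<open>P\<^sub>z(j)\<close> the
  product of the first \<open>j\<close> entries of \<open>z\<close>. The isotopism \<open>z\<^sub>j \<mapsto> a\<^sub>j\<inverse> z\<^sub>j a\<^sub>j\<^sub>+\<^sub>1\<close> sends \<open>u\<close>
  to \<open>w\<close>, and it preserves all products because they telescope and \<open>a\<^sub>0 = a\<^sub>k = \<one>\<close>.\<close>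

lemma group_foldr_fibre_transitive:
  fixes G :: "nat monoid" (structure)
  assumes "group G" and carrier: "carrier G = {..<q}"
  shows "fibre_transitive q k (\<lambda>z. foldr (\<otimes>) z \<one>)"
  unfolding fibre_transitive_def
proof (intro ballI impI)
  interpret group G by fact
  fix u w assume u: "u \<in> Qn q k" and w: "w \<in> Qn q k"
    and uw: "foldr (\<otimes>) u \<one> = foldr (\<otimes>) w \<one>"
  have in_carrier: "set z \<subseteq> carrier G" if "z \<in> Qn q k" for z
    using that carrier by (auto simp: Qn_def)
  have nth_in_carrier: "z ! j \<in> carrier G" if "z \<in> Qn q k" "j < k" for z j
    using that carrier by (simp add: Qn_nth)
  define P where "P z j = foldr (\<otimes>) (take j z) \<one>" for z j
  have P_closed: "P z j \<in> carrier G" if "z \<in> Qn q k" for z j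
    unfolding P_def using in_carrier[OF that] by (intro foldr_closed) (auto dest: in_set_takeD)
  have P_Suc: "P z (Suc j) = P z j \<otimes> z ! j" if "z \<in> Qn q k" "j < k" for z j
    using foldr_take_Suc[OF in_carrier[OF that(1)]] that by (simp add: P_def Qn_def)
  have P_length: "P z k = foldr (\<otimes>) z \<one>" if "z \<in> Qn q k" for z
    using that by (simp add: P_def Qn_def)
  define a where "a j = inv (P u j) \<otimes> P w j" for j
  have a_closed: "a j \<in> carrier G" for j
    using P_closed u w by (simp add: a_def)
  have a_0: "a 0 = \<one>" and a_k: "a k = \<one>"
    using uw P_length[OF u] P_length[OF w] P_closed[OF w, of k] by (simp_all add: a_def P_def)
  define \<rho> where "\<rho> = (\<lambda>j v. inv (a j) \<otimes> v \<otimes> a (Suc j))"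
  have "isotopism q k \<rho>"
    using bij_betw_translations[OF inv_closed[OF a_closed] a_closed] carrier
    unfolding isotopism_def \<rho>_def by simp
  moreover have "foldr (\<otimes>) (iso_apply \<rho> z) \<one> = foldr (\<otimes>) z \<one>" if z: "z \<in> Qn q k" for z
    using foldr_iso_apply_telescope[OF \<open>group G\<close> in_carrier[OF z], of a] a_closed
      z a_0 a_k foldr_closed[OF in_carrier[OF z] one_closed]
    by (simp add: \<rho>_def Qn_def)
  moreover have "iso_apply \<rho> u = w"
  proof (rule nth_equalityI)
    show "length (iso_apply \<rho> u) = length w" using u w by (simp add: Qn_def)
    fix j assume "j < length (iso_apply \<rho> u)"
    then have j: "j < k" using u by (simp add: Qn_def)
    have "\<rho> j (u ! j) = w ! j"
      using P_Suc[OF u j] P_Suc[OF w j] P_closed[OF u] P_closed[OF w]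
        nth_in_carrier[OF u j] nth_in_carrier[OF w j]
      by (simp add: \<rho>_def a_def inv_mult_group m_assoc)
    then show "iso_apply \<rho> u ! j = w ! j" using j u by (simp add: Qn_def)
  qed
  ultimately show "\<exists>\<rho>. isotopism q k \<rho> \<and>
      (\<forall>z\<in>Qn q k. foldr (\<otimes>) (iso_apply \<rho> z) \<one> = foldr (\<otimes>) z \<one>) \<and> iso_apply \<rho> u = w"
    by blast
qed

lemma fibre_transitive_cong:
  assumes "\<And>z. z \<in> Qn q k \<Longrightarrow> h z = h' z"
  shows "fibre_transitive q k h \<longleftrightarrow> fibre_transitive q k h'"
proof -
  have "fibre_transitive q k h\<^sub>2"
    if "fibre_transitive q k h\<^sub>1" "\<And>z. z \<in> Qn q k \<Longrightarrow> h\<^sub>1 z = h\<^sub>2 z" for h\<^sub>1 h\<^sub>2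
    using that iso_apply_in_Qn unfolding fibre_transitive_def by metis
  then show ?thesis using assms by (metis (no_types))
qed

lemma iterated_group_fibre_transitive:
  assumes "iterated_group q k h"
  shows "fibre_transitive q k h"
proof -
  obtain G :: "nat monoid" where "group G" "carrier G = {..<q}"
    and "\<And>z. z \<in> Qn q k \<Longrightarrow> h z = foldr (\<otimes>\<^bsub>G\<^esub>) z \<one>\<^bsub>G\<^esub>"
    using iterated_groupE[OF assms] by blast
  then show ?thesis
    using group_foldr_fibre_transitive fibre_transitive_cong by metis
qed

lemma fibre_transitive_retarget:
  assumes "fibre_transitive q k h" and \<tau>: "isotopism q k \<tau>"
    and \<tau>_h: "\<And>z. z \<in> Qn q k \<Longrightarrow> h (iso_apply \<tau> z) = s (h z)"
    and u: "u \<in> Qn q k" and w: "w \<in> Qn q k" and "s (h u) = h w"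
  shows "\<exists>\<pi>. isotopism q k \<pi> \<and> (\<forall>z\<in>Qn q k. h (iso_apply \<pi> z) = s (h z)) \<and> iso_apply \<pi> u = w"
proof -
  have "iso_apply \<tau> u \<in> Qn q k" and "h (iso_apply \<tau> u) = h w"
    using iso_apply_in_Qn[OF \<tau> u] \<tau>_h[OF u] assms(6) by simp_all
  then obtain \<rho> where \<rho>: "isotopism q k \<rho>" and \<rho>_h: "\<forall>z\<in>Qn q k. h (iso_apply \<rho> z) = h z"
    and \<rho>_u: "iso_apply \<rho> (iso_apply \<tau> u) = w"
    using assms(1) w unfolding fibre_transitive_def by blast
  show ?thesis
    using isotopism_comp[OF \<rho> \<tau>] \<rho>_h \<tau>_h \<rho>_u iso_apply_in_Qn[OF \<tau>]
    by (intro exI[of _ "\<lambda>j. \<rho> j \<circ> \<tau> j"]) (simp add: iso_apply_comp)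
qed

section \<open>Blocks of coordinates\<close>

text \<open>Blocks are numbered \<open>1,\<dots>,n\<close> as in the paper; block \<open>i\<close> occupies the coordinates
  \<open>block_start m i \<le> k < block_start m i + m i\<close>.\<close>

definition block_start :: "(nat \<Rightarrow> nat) \<Rightarrow> nat \<Rightarrow> nat" where
  "block_start m i = (\<Sum>j\<in>{1..<i}. m j)"

definition block :: "(nat \<Rightarrow> nat) \<Rightarrow> nat \<Rightarrow> 'a list \<Rightarrow> 'a list" where
  "block m i zs = take (m i) (drop (block_start m i) zs)"

definition block_index :: "(nat \<Rightarrow> nat) \<Rightarrow> nat \<Rightarrow> nat" where
  "block_index m k = (LEAST i. k < block_start m (Suc i))"

definition block_iso :: "(nat \<Rightarrow> nat) \<Rightarrow> (nat \<Rightarrow> nat \<Rightarrow> nat \<Rightarrow> nat) \<Rightarrow> nat \<Rightarrow> nat \<Rightarrow> nat" where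
  "block_iso m \<pi> k = \<pi> (block_index m k) (k - block_start m (block_index m k))"

lemma block_start_Suc_0 [simp]: "block_start m (Suc 0) = 0"
  by (simp add: block_start_def)

lemma block_start_Suc: "1 \<le> i \<Longrightarrow> block_start m (Suc i) = block_start m i + m i"
  by (simp add: block_start_def sum.atLeastLessThan_Suc)

lemma block_start_mono: "i \<le> j \<Longrightarrow> block_start m i \<le> block_start m j"
  unfolding block_start_def by (rule sum_mono2) auto

lemma block_start_last: "block_start m (Suc n) = (\<Sum>i=1..n. m i)"
  by (simp add: block_start_def atLeastLessThanSuc_atLeastAtMost)

lemma block_end_le: "i \<in> {1..n} \<Longrightarrow> block_start m i + m i \<le> block_start m (Suc n)"
  using block_start_mono[of "Suc i" "Suc n" m] by (simp add: block_start_Suc)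

lemma block_index_bounds:
  assumes "k < block_start m (Suc n)"
  shows "block_index m k \<in> {1..n}" and "block_start m (block_index m k) \<le> k"
    and "k < block_start m (block_index m k) + m (block_index m k)"
proof -
  have upper: "k < block_start m (Suc (block_index m k))"
    unfolding block_index_def by (rule LeastI[of _ n]) (rule assms)
  have "block_index m k \<le> n"
    unfolding block_index_def by (rule Least_le) (rule assms)
  moreover obtain i where i: "block_index m k = Suc i"
    using upper by (cases "block_index m k") auto
  moreover have "\<not> k < block_start m (Suc i)"
  proof -
    have "i < (LEAST i. k < block_start m (Suc i))" using i by (simp add: block_index_def)
    then show ?thesis by (rule not_less_Least)
  qed
  ultimately show "block_index m k \<in> {1..n}" "block_start m (block_index m k) \<le> k"
    "k < block_start m (block_index m k) + m (block_index m k)"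
    using upper by (auto simp: block_start_Suc)
qed

lemma block_index_eq:
  assumes "1 \<le> i" "j < m i"
  shows "block_index m (block_start m i + j) = i"
  unfolding block_index_def
proof (rule Least_equality)
  show "block_start m i + j < block_start m (Suc i)" using assms by (simp add: block_start_Suc)
  fix i' assume "block_start m i + j < block_start m (Suc i')"
  then show "i \<le> i'" using block_start_mono[of "Suc i'" i m] by (cases "i \<le> i'") auto
qed

lemma length_block: "length (block m i zs) = min (m i) (length zs - block_start m i)"
  by (simp add: block_def)

lemma nth_block: "j < length (block m i zs) \<Longrightarrow> block m i zs ! j = zs ! (block_start m i + j)"
  by (cases "block_start m i \<le> length zs") (auto simp: block_def)

lemma block_iso_apply:
  "block m i (iso_apply T zs) = iso_apply (\<lambda>j. T (block_start m i + j)) (block m i zs)"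
  by (rule nth_equalityI) (auto simp: length_block nth_block)

lemma block_in_Qn:
  assumes "zs \<in> Qn q (block_start m (Suc n))" "i \<in> {1..n}"
  shows "block m i zs \<in> Qn q (m i)"
  using assms block_end_le[OF assms(2), of m] unfolding Qn_def block_def
  by (auto dest: in_set_takeD in_set_dropD)

lemma list_eq_by_blocks:
  assumes "length zs = block_start m (Suc n)" "length ws = block_start m (Suc n)"
    and "\<And>i. i \<in> {1..n} \<Longrightarrow> block m i zs = block m i ws"
  shows "zs = ws"
proof (rule nth_equalityI)
  show "length zs = length ws" using assms by simp
  fix k assume "k < length zs"
  then have k: "k < block_start m (Suc n)" using assms by simp
  define i where "i = block_index m k"
  have i: "i \<in> {1..n}" "block_start m i \<le> k" "k < block_start m i + m i"
    using block_index_bounds[OF k] by (simp_all add: i_def)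
  have "k - block_start m i < length (block m i zs)" "k - block_start m i < length (block m i ws)"
    using i k assms(1,2) by (auto simp: length_block)
  then have "block m i zs ! (k - block_start m i) = block m i ws ! (k - block_start m i)"
    using assms(3)[OF i(1)] by simp
  then show "zs ! k = ws ! k"
    using nth_block \<open>k - block_start m i < length (block m i zs)\<close>
      \<open>k - block_start m i < length (block m i ws)\<close> i(2) by (metis le_add_diff_inverse)
qed

lemma isotopism_block_iso:
  assumes "\<And>i. i \<in> {1..n} \<Longrightarrow> isotopism q (m i) (\<pi> i)"
  shows "isotopism q (block_start m (Suc n)) (block_iso m \<pi>)"
  unfolding isotopism_def
proof (intro allI impI)
  fix k assume "k < block_start m (Suc n)"
  from block_index_bounds[OF this] show "bij_betw (block_iso m \<pi> k) {..<q} {..<q}"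
    using assms unfolding block_iso_def isotopism_def by auto
qed

lemma block_block_iso:
  assumes "1 \<le> i"
  shows "block m i (iso_apply (block_iso m \<pi>) zs) = iso_apply (\<pi> i) (block m i zs)"
  unfolding block_iso_apply
  by (rule iso_apply_cong) (use assms in \<open>auto simp: length_block block_iso_def block_index_eq\<close>)

section \<open>Composition of quasigroups\<close>

lemma is_quasigroup_range: "is_quasigroup q n f \<Longrightarrow> x \<in> Qn q n \<Longrightarrow> f x < q"
  by (simp add: is_quasigroup_def)

definition compose_args :: "nat \<Rightarrow> (nat \<Rightarrow> nat list \<Rightarrow> nat) \<Rightarrow> (nat \<Rightarrow> nat) \<Rightarrow> nat list \<Rightarrow> nat list" where
  "compose_args n h m zs = map (\<lambda>i. h i (block m i zs)) [1..<Suc n]"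

lemma compose_qg_eq: "compose_qg n f h m zs = f (compose_args n h m zs)"
  by (simp add: compose_qg_def compose_args_def block_def block_start_def)

lemma length_compose_args [simp]: "length (compose_args n h m zs) = n"
  by (simp add: compose_args_def)

lemma nth_compose_args: "r < n \<Longrightarrow> compose_args n h m zs ! r = h (Suc r) (block m (Suc r) zs)"
  by (simp add: compose_args_def del: upt_Suc)

lemma compose_args_in_Qn:
  assumes "\<And>i. i \<in> {1..n} \<Longrightarrow> is_quasigroup q (m i) (h i)"
    and "zs \<in> Qn q (block_start m (Suc n))"
  shows "compose_args n h m zs \<in> Qn q n"
proof -
  have "compose_args n h m zs ! r < q" if "r < n" for r
    using is_quasigroup_range[OF assms(1) block_in_Qn[OF assms(2)], of "Suc r"] that
    by (simp add: nth_compose_args)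
  then show ?thesis by (auto simp: Qn_def in_set_conv_nth)
qed

lemma single_change_blocks:
  assumes zs: "zs \<in> Qn q (block_start m (Suc n))" and ws: "ws \<in> Qn q (block_start m (Suc n))"
    and k: "k < block_start m (Suc n)" "zs ! k \<noteq> ws ! k"
    and same: "\<forall>j<block_start m (Suc n). j \<noteq> k \<longrightarrow> zs ! j = ws ! j"
  defines "i \<equiv> block_index m k"
  shows "card {j. j < m i \<and> block m i zs ! j \<noteq> block m i ws ! j} = 1"
    and "\<And>r. r \<in> {1..n} \<Longrightarrow> r \<noteq> i \<Longrightarrow> block m r zs = block m r ws"
proof -
  define p where "p = k - block_start m i"
  have i: "i \<in> {1..n}" and k_eq: "k = block_start m i + p" and p: "p < m i"
    using block_index_bounds[OF k(1)] by (auto simp: i_def p_def)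
  have len: "length (block m r zs) = m r" "length (block m r ws) = m r" if "r \<in> {1..n}" for r
    using block_in_Qn[OF zs that] block_in_Qn[OF ws that] by (simp_all add: Qn_def)
  have block_nth: "block m r zs ! j = block m r ws ! j \<longleftrightarrow> zs ! (block_start m r + j) = ws ! (block_start m r + j)"
    if "r \<in> {1..n}" "j < m r" for r j
    using nth_block len[OF that(1)] that(2) by metis
  have "block m i zs ! p \<noteq> block m i ws ! p"
    using block_nth[OF i p] k(2) k_eq by simp
  moreover have "block m i zs ! j = block m i ws ! j" if "j < m i" "j \<noteq> p" for j
    using block_nth[OF i that(1)] same block_end_le[OF i, of m] that k_eq by simp
  ultimately show "card {j. j < m i \<and> block m i zs ! j \<noteq> block m i ws ! j} = 1"
    unfolding card_differ_eq_1_iff using p by blast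
  fix r assume r: "r \<in> {1..n}" "r \<noteq> i"
  show "block m r zs = block m r ws"
  proof (rule nth_equalityI)
    fix j assume "j < length (block m r zs)"
    then have j: "j < m r" using len[OF r(1)] by simp
    have "block_start m r + j \<noteq> k" using r block_index_eq[of r j m] j by (auto simp: i_def)
    then show "block m r zs ! j = block m r ws ! j"
      using block_nth[OF r(1) j] same block_end_le[OF r(1), of m] j by simp
  qed (simp add: len[OF r(1)])
qed

lemma compose_is_quasigroup:
  assumes h: "\<And>i. i \<in> {1..n} \<Longrightarrow> is_quasigroup q (m i) (h i)" and f: "is_quasigroup q n f"
  shows "is_quasigroup q (block_start m (Suc n)) (compose_qg n f h m)"
proof -
  let ?M = "block_start m (Suc n)"
  have "f (compose_args n h m zs) \<noteq> f (compose_args n h m ws)"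
    if zs: "zs \<in> Qn q ?M" and ws: "ws \<in> Qn q ?M" and k: "k < ?M" "zs ! k \<noteq> ws ! k"
      and same: "\<forall>j<?M. j \<noteq> k \<longrightarrow> zs ! j = ws ! j" for zs ws k
  proof -
    obtain i where i: "block_index m k = Suc i" "i < n"
      using block_index_bounds(1)[OF k(1)] by (cases "block_index m k") auto
    have "h (Suc i) (block m (Suc i) zs) \<noteq> h (Suc i) (block m (Suc i) ws)"
      using single_change_blocks(1)[OF zs ws k same] h[of "Suc i"] i
        block_in_Qn[OF zs, of "Suc i"] block_in_Qn[OF ws, of "Suc i"]
      by (simp add: is_quasigroup_def)
    moreover have "compose_args n h m zs ! r = compose_args n h m ws ! r" if "r < n" "r \<noteq> i" for r
      using single_change_blocks(2)[OF zs ws k same, of "Suc r"] that i by (simp add: nth_compose_args)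
    ultimately have "card {r. r < n \<and> compose_args n h m zs ! r \<noteq> compose_args n h m ws ! r} = 1"
      unfolding card_differ_eq_1_iff using i(2) by (auto simp: nth_compose_args)
    then show ?thesis
      using f compose_args_in_Qn[OF h zs] compose_args_in_Qn[OF h ws]
      by (simp add: is_quasigroup_def)
  qed
  moreover have "f (compose_args n h m zs) < q" if "zs \<in> Qn q ?M" for zs
    using is_quasigroup_range[OF f compose_args_in_Qn[OF h that]] .
  ultimately show ?thesis
    unfolding is_quasigroup_def card_differ_eq_1_iff compose_qg_eq by blast
qed

lemma finite_qgraph: "finite (qgraph q n f)"
proof -
  have "qgraph q n f = (\<lambda>xs. f xs # xs) ` Qn q n" by (auto simp: qgraph_def)
  then show ?thesis using finite_Qn by simp
qed

lemma autotopy_qgraph_apply: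
  assumes "\<sigma> \<in> autotopy_group q (Suc n) (qgraph q n f)" "xs \<in> Qn q n"
  shows "\<sigma> 0 (f xs) = f (iso_apply (\<lambda>k. \<sigma> (Suc k)) xs)"
proof -
  have "iso_apply \<sigma> (f xs # xs) \<in> qgraph q n f"
    using assms by (auto simp: autotopy_group_def qgraph_def)
  then show ?thesis by (auto simp: qgraph_def iso_apply_Cons)
qed

lemma autotopy_qgraphI:
  assumes s: "bij_betw s {..<q} {..<q}" and T: "isotopism q N T"
    and g: "\<And>zs. zs \<in> Qn q N \<Longrightarrow> g zs < q"
    and equivariant: "\<And>zs. zs \<in> Qn q N \<Longrightarrow> g (iso_apply T zs) = s (g zs)"
  shows "case_nat s T \<in> autotopy_group q (Suc N) (qgraph q N g)"
proof -
  have apply_graph: "iso_apply (case_nat s T) (g zs # zs) = g (iso_apply T zs) # iso_apply T zs"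
    if "zs \<in> Qn q N" for zs
    using equivariant[OF that] by (simp add: iso_apply_Cons)
  have "qgraph q N g \<subseteq> Qn q (Suc N)"
    using g by (auto simp: qgraph_def Qn_def)
  then have "inj_on (iso_apply (case_nat s T)) (qgraph q N g)"
    using inj_on_iso_apply[OF isotopism_case_nat[OF s T]] inj_on_subset by blast
  moreover have "iso_apply (case_nat s T) ` qgraph q N g \<subseteq> qgraph q N g"
    using apply_graph iso_apply_in_Qn[OF T] by (fastforce simp: qgraph_def)
  ultimately have "iso_apply (case_nat s T) ` qgraph q N g = qgraph q N g"
    using endo_inj_surj[OF finite_qgraph] by blast
  then show ?thesis
    using isotopism_case_nat[OF s T] by (simp add: autotopy_group_def)
qed

lemma autotopy_compose_qgraph:
  assumes h: "\<And>i. i \<in> {1..n} \<Longrightarrow> is_quasigroup q (m i) (h i)" and f: "is_quasigroup q n f"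
    and \<sigma>: "\<sigma> \<in> autotopy_group q (Suc n) (qgraph q n f)"
    and \<pi>: "\<And>i. i \<in> {1..n} \<Longrightarrow> isotopism q (m i) (\<pi> i)"
    and \<pi>_h: "\<And>i z. i \<in> {1..n} \<Longrightarrow> z \<in> Qn q (m i) \<Longrightarrow> h i (iso_apply (\<pi> i) z) = \<sigma> i (h i z)"
  shows "case_nat (\<sigma> 0) (block_iso m \<pi>)
           \<in> autotopy_group q (Suc (block_start m (Suc n))) (qgraph q (block_start m (Suc n)) (compose_qg n f h m))"
proof (rule autotopy_qgraphI)
  show "bij_betw (\<sigma> 0) {..<q} {..<q}"
    using \<sigma> by (simp add: autotopy_group_def isotopism_def)
  show "isotopism q (block_start m (Suc n)) (block_iso m \<pi>)"
    using \<pi> by (rule isotopism_block_iso)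
  fix zs assume zs: "zs \<in> Qn q (block_start m (Suc n))"
  show "compose_qg n f h m zs < q"
    using is_quasigroup_range[OF f compose_args_in_Qn[OF h zs]] by (simp add: compose_qg_eq)
  have "compose_args n h m (iso_apply (block_iso m \<pi>) zs)
          = iso_apply (\<lambda>k. \<sigma> (Suc k)) (compose_args n h m zs)"
    by (rule nth_equalityI)
      (simp_all add: nth_compose_args block_block_iso \<pi>_h block_in_Qn[OF zs])
  then show "compose_qg n f h m (iso_apply (block_iso m \<pi>) zs) = \<sigma> 0 (compose_qg n f h m zs)"
    using autotopy_qgraph_apply[OF \<sigma> compose_args_in_Qn[OF h zs]] by (simp add: compose_qg_eq)
qed

lemma compose_qgraph_isotopically_transitive:
  assumes h: "\<And>i. i \<in> {1..n} \<Longrightarrow> is_quasigroup q (m i) (h i)"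
    and fibre: "\<And>i. i \<in> {1..n} \<Longrightarrow> fibre_transitive q (m i) (h i)"
    and f: "is_quasigroup q n f" and f_transitive: "isotopically_transitive q (Suc n) (qgraph q n f)"
    and lift: "\<And>i \<sigma>. i \<in> {1..n} \<Longrightarrow> \<sigma> \<in> autotopy_group q (Suc n) (qgraph q n f) \<Longrightarrow>
      \<exists>\<tau>. isotopism q (m i) \<tau> \<and> (\<forall>z\<in>Qn q (m i). h i (iso_apply \<tau> z) = \<sigma> i (h i z))"
  shows "isotopically_transitive q (Suc (block_start m (Suc n)))
           (qgraph q (block_start m (Suc n)) (compose_qg n f h m))"
  unfolding isotopically_transitive_def
proof (intro ballI)
  let ?M = "block_start m (Suc n)" and ?g = "compose_qg n f h m"
  fix X Y assume "X \<in> qgraph q ?M ?g" "Y \<in> qgraph q ?M ?g"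
  then obtain zs ws where zs: "zs \<in> Qn q ?M" and X: "X = ?g zs # zs"
    and ws: "ws \<in> Qn q ?M" and Y: "Y = ?g ws # ws"
    by (auto simp: qgraph_def)
  let ?xs = "compose_args n h m zs" and ?ys = "compose_args n h m ws"
  have "f ?xs # ?xs \<in> qgraph q n f" "f ?ys # ?ys \<in> qgraph q n f"
    using compose_args_in_Qn[OF h zs] compose_args_in_Qn[OF h ws] by (auto simp: qgraph_def)
  then obtain \<sigma> where \<sigma>: "\<sigma> \<in> autotopy_group q (Suc n) (qgraph q n f)"
    and \<sigma>_xs: "iso_apply \<sigma> (f ?xs # ?xs) = f ?ys # ?ys"
    using f_transitive unfolding isotopically_transitive_def by blast
  have \<sigma>_block: "\<sigma> i (h i (block m i zs)) = h i (block m i ws)" if i: "i \<in> {1..n}" for i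
  proof -
    obtain r where "i = Suc r" "r < n" using i by (cases i) auto
    then show ?thesis
      using arg_cong[OF \<sigma>_xs, of "\<lambda>l. l ! i"] by (simp add: iso_apply_Cons nth_compose_args)
  qed
  have "\<exists>\<pi>. isotopism q (m i) \<pi> \<and> (\<forall>z\<in>Qn q (m i). h i (iso_apply \<pi> z) = \<sigma> i (h i z))
          \<and> iso_apply \<pi> (block m i zs) = block m i ws" if i: "i \<in> {1..n}" for i
  proof -
    obtain \<tau> where "isotopism q (m i) \<tau>" "\<forall>z\<in>Qn q (m i). h i (iso_apply \<tau> z) = \<sigma> i (h i z)"
      using lift[OF i \<sigma>] by blast
    then show ?thesis
      using fibre_transitive_retarget[OF fibre[OF i]] block_in_Qn[OF zs i] block_in_Qn[OF ws i]
        \<sigma>_block[OF i] by blast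
  qed
  then obtain \<pi> where \<pi>: "\<forall>i\<in>{1..n}. isotopism q (m i) (\<pi> i)
      \<and> (\<forall>z\<in>Qn q (m i). h i (iso_apply (\<pi> i) z) = \<sigma> i (h i z))
      \<and> iso_apply (\<pi> i) (block m i zs) = block m i ws"
    by metis
  have \<Phi>: "case_nat (\<sigma> 0) (block_iso m \<pi>) \<in> autotopy_group q (Suc ?M) (qgraph q ?M ?g)"
    using \<pi> by (intro autotopy_compose_qgraph[OF h f \<sigma>]) auto
  have zs_ws: "iso_apply (block_iso m \<pi>) zs = ws"
  proof (rule list_eq_by_blocks[of _ m n])
    show "length (iso_apply (block_iso m \<pi>) zs) = ?M" "length ws = ?M"
      using zs ws by (simp_all add: Qn_def)
    fix i assume "i \<in> {1..n}"
    then show "block m i (iso_apply (block_iso m \<pi>) zs) = block m i ws"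
      using \<pi> block_block_iso[of i m \<pi> zs] by simp
  qed
  have "\<sigma> 0 (?g zs) = ?g ws"
    using \<sigma>_xs by (simp add: compose_qg_eq iso_apply_Cons)
  then have "iso_apply (case_nat (\<sigma> 0) (block_iso m \<pi>)) X = Y"
    using X Y zs_ws by (simp add: iso_apply_Cons)
  with \<Phi> show "\<exists>\<Phi>\<in>autotopy_group q (Suc ?M) (qgraph q ?M ?g). iso_apply \<Phi> X = Y"
    by blast
qed

theorem mainTheorem9:
  fixes q n :: nat and m :: "nat \<Rightarrow> nat"
    and h :: "nat \<Rightarrow> nat list \<Rightarrow> nat" and f :: "nat list \<Rightarrow> nat"
  assumes "n \<ge> 2"
    and "\<forall>i\<in>{1..n}. m i \<ge> 1"
    and "\<forall>i\<in>{1..n}. iterated_group q (m i) (h i)"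
    and "iso_transitive_quasigroup q n f"
    and "\<forall>i\<in>{1..n}. \<forall>\<sigma>\<in>autotopy_group q (n + 1) (qgraph q n f).
           \<exists>\<tau>. isotopism q (m i) \<tau> \<and>
               (\<forall>z\<in>Qn q (m i). h i (iso_apply \<tau> z) = \<sigma> i (h i z))"
  shows "iso_transitive_quasigroup q (\<Sum>i=1..n. m i) (compose_qg n f h m)"
proof -
  have h_quasigroup: "\<And>i. i \<in> {1..n} \<Longrightarrow> is_quasigroup q (m i) (h i)"
    using assms(3) iterated_group_is_quasigroup by blast
  have h_fibre: "\<And>i. i \<in> {1..n} \<Longrightarrow> fibre_transitive q (m i) (h i)"
    using assms(3) iterated_group_fibre_transitive by blast
  have f: "is_quasigroup q n f" "isotopically_transitive q (Suc n) (qgraph q n f)"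
    using assms(4) by (simp_all add: iso_transitive_quasigroup_def)
  have "is_quasigroup q (block_start m (Suc n)) (compose_qg n f h m)"
    by (rule compose_is_quasigroup[OF h_quasigroup f(1)])
  moreover have "isotopically_transitive q (Suc (block_start m (Suc n)))
      (qgraph q (block_start m (Suc n)) (compose_qg n f h m))"
    by (rule compose_qgraph_isotopically_transitive[OF h_quasigroup h_fibre f]) (use assms(5) in auto)
  ultimately show ?thesis
    by (simp add: iso_transitive_quasigroup_def block_start_last)
qed

end
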